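(* Every $d$-uniform properly-connected triangulated hypergraph is a properly-splitted hypergraph.
   Context: A hypergraph $\mathcal{C}$ on a finite vertex set $V$ is a family of pairwise incomparable subsets of $V$ (its edges), each of cardinality at least $2$; it is $d$-uniform if every edge has $d$ elements. $\operatorname{Ind}(\mathcal{C})$ is the simplicial complex on $V$ of subsets containing no edge. For an edge $F$: $\mathcal{C}-F$ is the hypergraph on $V$ with edge set $\mathcal{C}\setminus\{F\}$; $N_{\mathcal{C}}(F)=\bigcup\{E\setminus F : E\in\mathcal{C},\ |E\setminus F|=1\}$; $\mathcal{C}:F$ is the hypergraph on $V\setminus(F\cup N_{\mathcal{C}}(F))$ whose edges are the members of cardinality at least $2$ among the inclusion-minimal members of $\{E\setminus F: E\in\mathcal{C}-F\}$. For $A\subseteq V$, $\mathcal{C}_A=\{E\in\mathcal{C}: E\subseteq A\}$ on $A$. Two distinct vertices are neighbours if some edge contains both; $N_{\mathcal{C}}(x)$ is the set of neighbours of $x$. The $d$-complete hypergraph of order $m$ has as edges all $d$-subsets of its $m$-element vertex set (no edges if $m<d$). Given edges $F,G$ with $|F|\ge|G|$, a proper chain from $F$ to $G$ is a sequence $(E_0=F,x_1,E_1,\dots,x_n,E_n=G)$ with distinct vertices $x_i$ and distinct edges $E_j$ such that $x_1\in E_0$, $x_n\in E_n$, $x_k,x_{k+1}\in E_k$ for $k=1,\dots,n-1$, and $|E_i\cap E_{i+1}|=|E_{i+1}|-1$ for $i=0,\dots,n-1$; its length is $n$; it is irredundant if no subsequence is a proper chain from $F$ to $G$. $\operatorname{dist}_{\mathcal{C}}(F,G)$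 is the minimum length of a proper irredundant chain from $F$ to $G$. A $d$-uniform hypergraph is properly-connected if $\operatorname{dist}_{\mathcal{C}}(F,G)=d-|F\cap G|$ whenever $F\cap G\neq\emptyset$. A $d$-uniform properly-connected hypergraph is triangulated if for every nonempty $A\subseteq V$ there is $v\in A$ such that $N_{\mathcal{C}_A}(v)$ induces a $d$-complete hypergraph of order $|N_{\mathcal{C}_A}(v)|$ and $v$ appears at most twice in any proper irredundant chain in $\mathcal{C}_A$. $\operatorname{conn_h}(\Delta)$ is the largest $k$ with $\tilde H_i(\Delta;\mathbb{Z})=0$ for all $i\le k$ ($\infty$ if all vanish; $\operatorname{conn_h}(\{\emptyset\})=-2$). A hypergraph $\mathcal{C}$ is properly-splitted (recursively on the number of edges) if either $\mathcal{C}$ has no edges, or $\mathcal{C}$ has an edge $F$ with $\operatorname{conn_h}(\operatorname{Ind}(\mathcal{C}:F))\ge \operatorname{conn_h}(\operatorname{Ind}(\mathcal{C}))-|F|+1$ such that both $\mathcal{C}-F$ and $\mathcal{C}:F$ are properly-splitted. *)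

theory Defs
  imports Main "HOL-Library.Sublist" "HOL-Library.Extended_Real"
begin

type_synonym 'a hgraph = "'a set \<times> 'a set set"

definition hypergraph :: "'a hgraph \<Rightarrow> bool" where
  "hypergraph C \<longleftrightarrow> finite (fst C) \<and>
     (\<forall>E\<in>snd C. E \<subseteq> fst C \<and> card E \<ge> 2) \<and>
     (\<forall>E\<in>snd C. \<forall>F\<in>snd C. E \<subseteq> F \<longrightarrow> E = F)"

definition uniform :: "nat \<Rightarrow> 'a hgraph \<Rightarrow> bool" where
  "uniform d C \<longleftrightarrow> (\<forall>E\<in>snd C. card E = d)"

definition Ind :: "'a hgraph \<Rightarrow> 'a set set" where
  "Ind C = {S. S \<subseteq> fst C \<and> (\<forall>E\<in>snd C. \<not> E \<subseteq> S)}"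

definition del_edge :: "'a hgraph \<Rightarrow> 'a set \<Rightarrow> 'a hgraph" where
  "del_edge C F = (fst C, snd C - {F})"

definition edge_nbhd :: "'a hgraph \<Rightarrow> 'a set \<Rightarrow> 'a set" where
  "edge_nbhd C F = \<Union>{E - F | E. E \<in> snd C \<and> card (E - F) = 1}"

definition colon :: "'a hgraph \<Rightarrow> 'a set \<Rightarrow> 'a hgraph" where
  "colon C F =
     (let D = {E - F | E. E \<in> snd C - {F}}
      in (fst C - (F \<union> edge_nbhd C F),
          {M \<in> D. (\<forall>M'\<in>D. M' \<subseteq> M \<longrightarrow> M' = M) \<and> card M \<ge> 2}))"

definition induced :: "'a hgraph \<Rightarrow> 'a set \<Rightarrow> 'a hgraph" where
  "induced C A = (A, {E \<in> snd C. E \<subseteq> A})"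

definition nbrs :: "'a hgraph \<Rightarrow> 'a \<Rightarrow> 'a set" where
  "nbrs C x = {y. y \<noteq> x \<and> (\<exists>E\<in>snd C. x \<in> E \<and> y \<in> E)}"

definition induces_complete :: "nat \<Rightarrow> 'a hgraph \<Rightarrow> 'a set \<Rightarrow> bool" where
  "induces_complete d C A \<longleftrightarrow> snd (induced C A) = {S. S \<subseteq> A \<and> card S = d}"

text \<open>A chain (E_0,x_1,E_1,...,x_n,E_n) is represented by the edge list es = [E_0,...,E_n]
  and the vertex list xs = [x_1,...,x_n]; its underlying sequence is the interleaving.\<close>

fun interleave :: "'b list \<Rightarrow> 'a list \<Rightarrow> ('b + 'a) list" where
  "interleave (e # es) (x # xs) = Inl e # Inr x # interleave es xs"
| "interleave es [] = map Inl es"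
| "interleave [] xs = map Inr xs"

definition proper_chain :: "'a hgraph \<Rightarrow> 'a set \<Rightarrow> 'a set \<Rightarrow> 'a set list \<Rightarrow> 'a list \<Rightarrow> bool" where
  "proper_chain C F G es xs \<longleftrightarrow>
     (let n = length xs in
      length es = n + 1 \<and> set es \<subseteq> snd C \<and> card F \<ge> card G \<and>
      es ! 0 = F \<and> es ! n = G \<and> distinct xs \<and> distinct es \<and>
      (n \<ge> 1 \<longrightarrow> xs ! 0 \<in> es ! 0 \<and> xs ! (n - 1) \<in> es ! n) \<and>
      (\<forall>k. 1 \<le> k \<and> k \<le> n - 1 \<longrightarrow> xs ! (k - 1) \<in> es ! k \<and> xs ! k \<in> es ! k) \<and>
      (\<forall>i < n. card (es ! i \<inter> es ! (i + 1)) = card (es ! (i + 1)) - 1))"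

definition irredundant_chain :: "'a hgraph \<Rightarrow> 'a set \<Rightarrow> 'a set \<Rightarrow> 'a set list \<Rightarrow> 'a list \<Rightarrow> bool" where
  "irredundant_chain C F G es xs \<longleftrightarrow> proper_chain C F G es xs \<and>
     (\<forall>es' xs'. proper_chain C F G es' xs' \<and>
        subseq (interleave es' xs') (interleave es xs) \<longrightarrow>
        interleave es' xs' = interleave es xs)"

definition chain_dist :: "'a hgraph \<Rightarrow> 'a set \<Rightarrow> 'a set \<Rightarrow> enat" where
  "chain_dist C F G = Inf {enat (length xs) | es xs. irredundant_chain C F G es xs}"

definition properly_connected :: "nat \<Rightarrow> 'a hgraph \<Rightarrow> bool" where
  "properly_connected d C \<longleftrightarrow> uniform d C \<and>
     (\<forall>F\<in>snd C. \<forall>G\<in>snd C. F \<inter> G \<noteq> {} \<longrightarrow>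
        chain_dist C F G = enat (d - card (F \<inter> G)))"

definition triangulated :: "nat \<Rightarrow> 'a hgraph \<Rightarrow> bool" where
  "triangulated d C \<longleftrightarrow> uniform d C \<and> properly_connected d C \<and>
     (\<forall>A. A \<noteq> {} \<and> A \<subseteq> fst C \<longrightarrow>
        (\<exists>v\<in>A. induces_complete d (induced C A) (nbrs (induced C A) v) \<and>
           (\<forall>F G es xs. irredundant_chain (induced C A) F G es xs \<longrightarrow>
              card {j. j < length es \<and> v \<in> es ! j} \<le> 2)))"

text \<open>Chains of degree i of a simplicial complex Delta (a set of finite faces, the empty
  face included): integer-valued functions supported on faces of cardinality i+1.
  Orientation is induced by the linear order of the vertex type.\<close>

definition chains :: "'a set set \<Rightarrow> int \<Rightarrow> ('a set \<Rightarrow> int) set" where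
  "chains \<Delta> i = {c. \<forall>\<sigma>. c \<sigma> \<noteq> 0 \<longrightarrow> \<sigma> \<in> \<Delta> \<and> int (card \<sigma>) = i + 1}"

definition bdry :: "'a::linorder set set \<Rightarrow> ('a set \<Rightarrow> int) \<Rightarrow> 'a set \<Rightarrow> int" where
  "bdry \<Delta> c \<tau> = (\<Sum>v \<in> \<Union>\<Delta> - \<tau>. (-1) ^ card {u \<in> \<tau>. u < v} * c (insert v \<tau>))"

definition homology_vanishes :: "'a::linorder set set \<Rightarrow> int \<Rightarrow> bool" where
  "homology_vanishes \<Delta> i \<longleftrightarrow>
     (\<forall>c \<in> chains \<Delta> i. bdry \<Delta> c = (\<lambda>_. 0) \<longrightarrow> (\<exists>b \<in> chains \<Delta> (i + 1). c = bdry \<Delta> b))"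

text \<open>Degrees below -1 vanish trivially, so
  conn_h of the complex consisting only of the empty face is -2.\<close>
definition conn_h :: "'a::linorder set set \<Rightarrow> ereal" where
  "conn_h \<Delta> = Sup {ereal (real_of_int k) | k. \<forall>i \<le> k. homology_vanishes \<Delta> i}"

inductive properly_splitted :: "'a::linorder hgraph \<Rightarrow> bool" where
  no_edges: "snd C = {} \<Longrightarrow> properly_splitted C"
| split: "F \<in> snd C \<Longrightarrow>
    conn_h (Ind (colon C F)) \<ge> conn_h (Ind C) - ereal (real (card F)) + 1 \<Longrightarrow>
    properly_splitted (del_edge C F) \<Longrightarrow> properly_splitted (colon C F) \<Longrightarrow>
    properly_splitted C"

end

theory Submission
  imports Defs
begin

text \<open>Induction on the number of edges. A simplicial vertex \<open>v\<close> is chosen among the covered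
  vertices, and the edges through \<open>v\<close> are split off one at a time. For such an edge \<open>F\<close>, the
  completeness of the neighbourhood of \<open>v\<close> lets one swap \<open>v\<close> for any vertex of \<open>N(F)\<close>, and
  proper connectivity lets every other edge meeting \<open>F\<close> reach \<open>N(F)\<close> in one step; hence
  \<open>C : F\<close> is the subhypergraph induced on \<open>V - (F \<union> N(F))\<close>. A cycle \<open>z\<close> of its independence
  complex that does not bound gives the cycle \<open>\<partial>(F * z)\<close> of \<open>Ind(C)\<close>, of dimension
  \<open>|F| - 1\<close> higher, and restricting a chain it bounded to the link of \<open>F - {v}\<close> would bound \<open>z\<close>.
  This gives the connectivity inequality; the colon and the hypergraph left after deleting all
  edges through \<open>v\<close> have fewer edges and again satisfy the hypotheses.\<close>

section \<open>Oriented boundaries\<close>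

definition insert_sign :: "'a::linorder set \<Rightarrow> 'a \<Rightarrow> int" where
  "insert_sign A x = (-1) ^ card {u \<in> A. u < x}"

definition join_sign :: "'a::linorder set \<Rightarrow> 'a set \<Rightarrow> int" where
  "join_sign A \<rho> = (\<Prod>x\<in>\<rho>. insert_sign A x)"

text \<open>The boundary \<open>bdry\<close> with the sum taken over a fixed ground set \<open>W\<close> instead of the vertices
  of the complex, so that chains of different complexes can be compared.\<close>
definition bdry_on :: "'a::linorder set \<Rightarrow> ('a set \<Rightarrow> int) \<Rightarrow> 'a set \<Rightarrow> int" where
  "bdry_on W c \<tau> = (\<Sum>x\<in>W - \<tau>. insert_sign \<tau> x * c (insert x \<tau>))"

lemma insert_sign_square [simp]: "insert_sign A x * insert_sign A x = 1"
  unfolding insert_sign_def by (simp flip: power_mult_distrib)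

lemma join_sign_square [simp]: "join_sign A \<rho> * join_sign A \<rho> = 1"
  unfolding join_sign_def by (simp flip: prod.distrib)

lemma insert_sign_insert:
  assumes "finite A" "u \<notin> A"
  shows "insert_sign (insert u A) x = (if u < x then - insert_sign A x else insert_sign A x)"
proof -
  have "{w \<in> insert u A. w < x} = (if u < x then insert u {w \<in> A. w < x} else {w \<in> A. w < x})"
    by auto
  then show ?thesis using assms unfolding insert_sign_def by auto
qed

lemma insert_sign_Un:
  assumes "finite A" "finite B" "A \<inter> B = {}"
  shows "insert_sign (A \<union> B) x = insert_sign A x * insert_sign B x"
proof -
  have "{w \<in> A \<union> B. w < x} = {w \<in> A. w < x} \<union> {w \<in> B. w < x}" by auto
  moreover have "card ({w \<in> A. w < x} \<union> {w \<in> B. w < x}) = card {w \<in> A. w < x} + card {w \<in> B. w < x}"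
    using assms by (intro card_Un_disjoint) auto
  ultimately show ?thesis unfolding insert_sign_def by (simp add: power_add)
qed

lemma join_sign_insert:
  "finite \<rho> \<Longrightarrow> x \<notin> \<rho> \<Longrightarrow> join_sign A (insert x \<rho>) = insert_sign A x * join_sign A \<rho>"
  unfolding join_sign_def by simp

lemma prod_neg_one_if:
  "finite A \<Longrightarrow> (\<Prod>x\<in>A. if P x then -1 else 1 :: int) = (-1) ^ card {x \<in> A. P x}"
proof (induction A rule: finite_induct)
  case (insert a A)
  have "{x \<in> insert a A. P x} = (if P a then insert a {x \<in> A. P x} else {x \<in> A. P x})" by auto
  then show ?case using insert by auto
qed simp

text \<open>Moving \<open>v\<close> out of \<open>F\<close> past the vertices of \<open>\<rho>\<close> costs one sign per vertex of \<open>\<rho>\<close>.\<close>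
lemma insert_sign_times_join_signs:
  assumes "finite \<rho>" "finite F" "v \<in> F" "\<rho> \<inter> F = {}"
  shows "insert_sign ((F - {v}) \<union> \<rho>) v * join_sign F \<rho> * join_sign (F - {v}) \<rho>
         = insert_sign (F - {v}) v * (-1) ^ card \<rho>"
proof -
  have v_notin: "v \<notin> \<rho>" using assms by auto
  have F_eq: "F = insert v (F - {v})" using assms by auto
  have "insert_sign F x * insert_sign (F - {v}) x = (if v < x then -1 else 1)" for x
    by (subst F_eq, subst insert_sign_insert) (use assms in auto)
  then have joins: "join_sign F \<rho> * join_sign (F - {v}) \<rho> = (-1) ^ card {x \<in> \<rho>. v < x}"
    unfolding join_sign_def by (simp add: prod.distrib[symmetric] prod_neg_one_if assms)
  have "\<rho> = {u \<in> \<rho>. u < v} \<union> {x \<in> \<rho>. v < x}" using v_notin by auto (metis neq_iff)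
  then have card_split: "card {u \<in> \<rho>. u < v} + card {x \<in> \<rho>. v < x} = card \<rho>"
    by (metis (no_types, lifting) assms(1) card_Un_disjoint disjoint_iff finite_Un mem_Collect_eq
        order_less_asym)
  have "insert_sign ((F - {v}) \<union> \<rho>) v = insert_sign (F - {v}) v * insert_sign \<rho> v"
    using assms by (intro insert_sign_Un) auto
  then show ?thesis
    by (simp add: mult.assoc joins) (simp add: insert_sign_def card_split flip: power_add)
qed

lemma bdry_eq_bdry_on:
  assumes "finite W" "\<Union>\<Delta> \<subseteq> W" "\<And>\<sigma>. c \<sigma> \<noteq> 0 \<Longrightarrow> \<sigma> \<in> \<Delta>"
  shows "bdry \<Delta> c \<tau> = bdry_on W c \<tau>"
  unfolding bdry_def bdry_on_def insert_sign_def
  by (rule sum.mono_neutral_left) (use assms in auto)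

lemma bdry_on_outside:
  assumes "\<And>\<sigma>. c \<sigma> \<noteq> 0 \<Longrightarrow> \<sigma> \<subseteq> W" "\<not> \<tau> \<subseteq> W"
  shows "bdry_on W c \<tau> = 0"
  unfolding bdry_on_def using assms by (intro sum.neutral) (metis Diff_iff insert_subset mult_zero_right)

lemma bdry_on_bdry_on:
  assumes "finite W" and supp: "\<And>\<sigma>. c \<sigma> \<noteq> 0 \<Longrightarrow> \<sigma> \<subseteq> W"
  shows "bdry_on W (bdry_on W c) \<tau> = 0"
proof (cases "\<tau> \<subseteq> W")
  case False
  have "bdry_on W c \<sigma> \<noteq> 0 \<Longrightarrow> \<sigma> \<subseteq> W" for \<sigma> using bdry_on_outside supp by blast
  then show ?thesis using bdry_on_outside False by blast
next
  case True
  then have fin_\<tau>: "finite \<tau>" using assms(1) finite_subset by blast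
  define f where "f x y = insert_sign \<tau> x * (if x < y then - insert_sign \<tau> y else insert_sign \<tau> y)
    * c (insert y (insert x \<tau>))" for x y
  define P where "P = Sigma (W - \<tau>) (\<lambda>x. W - insert x \<tau>)"
  have "bdry_on W (bdry_on W c) \<tau> = (\<Sum>x\<in>W - \<tau>. \<Sum>y\<in>W - insert x \<tau>. f x y)"
    unfolding bdry_on_def f_def
    by (intro sum.cong refl) (simp add: sum_distrib_left insert_sign_insert fin_\<tau> mult.assoc)
  also have "\<dots> = (\<Sum>(x, y)\<in>P. f x y)"
    unfolding P_def using assms(1) by (subst sum.Sigma) auto
  finally have sum_P: "bdry_on W (bdry_on W c) \<tau> = (\<Sum>(x, y)\<in>P. f x y)" .
  text \<open>The two orders of removing a pair of vertices contribute opposite signs.\<close>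
  have "(\<Sum>(x, y)\<in>P. f x y) = (\<Sum>(x, y)\<in>prod.swap ` P. f x y)"
    by (rule arg_cong[where f = "sum _"]) (force simp: P_def)
  also have "\<dots> = (\<Sum>(x, y)\<in>P. f y x)"
    by (subst sum.reindex) (auto simp: case_prod_beta)
  also have "\<dots> = (\<Sum>(x, y)\<in>P. - f x y)"
  proof (rule sum.cong[OF refl])
    fix p assume "p \<in> P"
    moreover obtain x y where p: "p = (x, y)" by fastforce
    ultimately have "x \<noteq> y" unfolding P_def by auto
    then show "(case p of (x, y) \<Rightarrow> f y x) = (case p of (x, y) \<Rightarrow> - f x y)"
      unfolding p f_def by (cases "x < y") (auto simp: insert_commute)
  qed
  finally show ?thesis using sum_P by (simp add: sum_negf case_prod_beta)
qed

lemma bdry_on_cmult: "bdry_on W (\<lambda>\<sigma>. a * c \<sigma>) \<tau> = a * bdry_on W c \<tau>"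
  unfolding bdry_on_def sum_distrib_left by (simp add: algebra_simps)

lemma bdry_on_sign_twist:
  assumes "finite \<tau>"
  shows "bdry_on W (\<lambda>\<sigma>. (-1) ^ Suc (card \<sigma>) * c \<sigma>) \<tau> = (-1) ^ card \<tau> * bdry_on W c \<tau>"
  unfolding bdry_on_def sum_distrib_left
  by (rule sum.cong) (use assms in auto)

section \<open>Joins and links of chains\<close>

locale join_frame =
  fixes W V F :: "'a::linorder set" and v :: 'a
  assumes finite_W: "finite W" and v_in_F: "v \<in> F" and F_subset: "F \<subseteq> W"
    and V_subset: "V \<subseteq> W" and F_V_disjoint: "F \<inter> V = {}"
begin

lemma finite_F: "finite F" and finite_V: "finite V"
  using finite_W F_subset V_subset by (auto intro: finite_subset)

definition join_chain :: "('a set \<Rightarrow> int) \<Rightarrow> 'a set \<Rightarrow> int" where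
  "join_chain z \<sigma> = (if F \<subseteq> \<sigma> then join_sign F (\<sigma> - F) * z (\<sigma> - F) else 0)"

definition link_chain :: "('a set \<Rightarrow> int) \<Rightarrow> 'a set \<Rightarrow> int" where
  "link_chain B \<rho> = (if \<rho> \<subseteq> V then join_sign (F - {v}) \<rho> * B ((F - {v}) \<union> \<rho>) else 0)"

lemma join_chain_support:
  assumes "\<And>\<rho>. z \<rho> \<noteq> 0 \<Longrightarrow> \<rho> \<subseteq> V" "join_chain z \<sigma> \<noteq> 0"
  shows "\<sigma> \<subseteq> W"
proof -
  have "F \<subseteq> \<sigma>" "z (\<sigma> - F) \<noteq> 0" using assms(2) unfolding join_chain_def by (auto split: if_splits)
  then show ?thesis using assms(1) F_subset V_subset by blast
qed

lemma bdry_join_chain_above_F: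
  assumes z_supp: "\<And>\<rho>. z \<rho> \<noteq> 0 \<Longrightarrow> \<rho> \<subseteq> V" and z_cycle: "bdry_on V z = (\<lambda>_. 0)"
    and "F \<subseteq> \<sigma>" "\<sigma> \<subseteq> W"
  shows "bdry_on W (join_chain z) \<sigma> = 0"
proof -
  define \<rho> where "\<rho> = \<sigma> - F"
  have fin_\<rho>: "finite \<rho>" unfolding \<rho>_def using assms finite_W finite_subset by blast
  have \<sigma>_eq: "\<sigma> = F \<union> \<rho>" and disj: "F \<inter> \<rho> = {}" unfolding \<rho>_def using assms by blast+
  have "bdry_on W (join_chain z) \<sigma> = (\<Sum>y\<in>W - \<sigma>. join_sign F \<rho> * (insert_sign \<rho> y * z (insert y \<rho>)))"
    unfolding bdry_on_def
  proof (rule sum.cong[OF refl])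
    fix y assume "y \<in> W - \<sigma>"
    then have y: "y \<notin> F" "y \<notin> \<rho>" using \<sigma>_eq by auto
    have "insert y \<sigma> - F = insert y \<rho>" using \<sigma>_eq y disj by blast
    moreover have "join_sign F (insert y \<rho>) = insert_sign F y * join_sign F \<rho>"
      using fin_\<rho> y by (simp add: join_sign_insert)
    moreover have "insert_sign \<sigma> y = insert_sign F y * insert_sign \<rho> y"
      unfolding \<sigma>_eq using finite_F fin_\<rho> disj by (rule insert_sign_Un)
    ultimately have "insert_sign \<sigma> y * join_chain z (insert y \<sigma>)
        = (insert_sign F y * insert_sign F y) * (join_sign F \<rho> * (insert_sign \<rho> y * z (insert y \<rho>)))"
      unfolding join_chain_def using assms(3) by (auto simp: algebra_simps)
    then show "insert_sign \<sigma> y * join_chain z (insert y \<sigma>)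
        = join_sign F \<rho> * (insert_sign \<rho> y * z (insert y \<rho>))" by simp
  qed
  also have "\<dots> = join_sign F \<rho> * (\<Sum>y\<in>W - \<sigma>. insert_sign \<rho> y * z (insert y \<rho>))"
    by (simp add: sum_distrib_left)
  also have "(\<Sum>y\<in>W - \<sigma>. insert_sign \<rho> y * z (insert y \<rho>)) = bdry_on V z \<rho>"
    unfolding bdry_on_def
  proof (rule sum.mono_neutral_right)
    show "finite (W - \<sigma>)" using finite_W by blast
    show "V - \<rho> \<subseteq> W - \<sigma>" using V_subset F_V_disjoint \<sigma>_eq by blast
    show "\<forall>y\<in>W - \<sigma> - (V - \<rho>). insert_sign \<rho> y * z (insert y \<rho>) = 0"
    proof
      fix y assume "y \<in> W - \<sigma> - (V - \<rho>)"
      then have "\<not> insert y \<rho> \<subseteq> V" using \<sigma>_eq by auto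
      then show "insert_sign \<rho> y * z (insert y \<rho>) = 0" using z_supp by (metis mult_zero_right)
    qed
  qed
  finally show ?thesis using z_cycle by simp
qed

lemma bdry_join_chain_at_link:
  assumes "\<rho> \<subseteq> V"
  shows "bdry_on W (join_chain z) ((F - {v}) \<union> \<rho>) = insert_sign ((F - {v}) \<union> \<rho>) v * join_sign F \<rho> * z \<rho>"
proof -
  define \<sigma> where "\<sigma> = (F - {v}) \<union> \<rho>"
  have v_notin: "v \<notin> \<sigma>" unfolding \<sigma>_def using assms F_V_disjoint v_in_F by blast
  text \<open>Only re-inserting \<open>v\<close> gives a face containing \<open>F\<close>.\<close>
  have "bdry_on W (join_chain z) \<sigma> = (\<Sum>x\<in>{v}. insert_sign \<sigma> x * join_chain z (insert x \<sigma>))"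
    unfolding bdry_on_def
  proof (rule sum.mono_neutral_right)
    show "finite (W - \<sigma>)" using finite_W by blast
    show "{v} \<subseteq> W - \<sigma>" using v_notin v_in_F F_subset by blast
    show "\<forall>x\<in>W - \<sigma> - {v}. insert_sign \<sigma> x * join_chain z (insert x \<sigma>) = 0"
      using v_notin v_in_F unfolding join_chain_def by auto
  qed
  moreover have "F \<subseteq> insert v \<sigma>" "insert v \<sigma> - F = \<rho>"
    unfolding \<sigma>_def using assms F_V_disjoint v_in_F by auto
  ultimately show ?thesis unfolding \<sigma>_def join_chain_def by simp
qed

lemma bdry_on_at_link:
  assumes above_F: "\<And>\<sigma>. F \<subseteq> \<sigma> \<Longrightarrow> B \<sigma> = 0"
    and blocked: "\<And>x \<sigma>. x \<in> W - F - V \<Longrightarrow> insert x (F - {v}) \<subseteq> \<sigma> \<Longrightarrow> B \<sigma> = 0"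
    and "\<rho> \<subseteq> V"
  shows "bdry_on W B ((F - {v}) \<union> \<rho>) = join_sign (F - {v}) \<rho> * bdry_on V (link_chain B) \<rho>"
proof -
  define \<sigma> where "\<sigma> = (F - {v}) \<union> \<rho>"
  have fin_\<rho>: "finite \<rho>" using assms(3) finite_V finite_subset by blast
  have "bdry_on W B \<sigma> = (\<Sum>x\<in>V - \<rho>. insert_sign \<sigma> x * B (insert x \<sigma>))"
    unfolding bdry_on_def
  proof (rule sum.mono_neutral_right)
    show "finite (W - \<sigma>)" using finite_W by blast
    show "V - \<rho> \<subseteq> W - \<sigma>" unfolding \<sigma>_def using V_subset F_V_disjoint by blast
    show "\<forall>x\<in>W - \<sigma> - (V - \<rho>). insert_sign \<sigma> x * B (insert x \<sigma>) = 0"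
    proof
      fix x assume x: "x \<in> W - \<sigma> - (V - \<rho>)"
      show "insert_sign \<sigma> x * B (insert x \<sigma>) = 0"
      proof (cases "x \<in> F")
        case True
        then have "F \<subseteq> insert x \<sigma>" using x unfolding \<sigma>_def by auto
        then show ?thesis using above_F by simp
      next
        case False
        then have "x \<in> W - F - V" "insert x (F - {v}) \<subseteq> insert x \<sigma>" using x unfolding \<sigma>_def by auto
        then show ?thesis using blocked by simp
      qed
    qed
  qed
  also have "\<dots> = (\<Sum>x\<in>V - \<rho>. join_sign (F - {v}) \<rho> * (insert_sign \<rho> x * link_chain B (insert x \<rho>)))"
  proof (rule sum.cong[OF refl])
    fix x assume x: "x \<in> V - \<rho>"
    have "insert_sign \<sigma> x = insert_sign (F - {v}) x * insert_sign \<rho> x"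
      unfolding \<sigma>_def using finite_F fin_\<rho> F_V_disjoint assms(3) by (intro insert_sign_Un) auto
    moreover have "join_sign (F - {v}) (insert x \<rho>) = insert_sign (F - {v}) x * join_sign (F - {v}) \<rho>"
      using fin_\<rho> x by (simp add: join_sign_insert)
    moreover have "insert x \<sigma> = (F - {v}) \<union> insert x \<rho>" unfolding \<sigma>_def by auto
    ultimately have "join_sign (F - {v}) \<rho> * (insert_sign \<rho> x * link_chain B (insert x \<rho>))
        = (join_sign (F - {v}) \<rho> * join_sign (F - {v}) \<rho>) * insert_sign \<sigma> x * B (insert x \<sigma>)"
      unfolding link_chain_def using x assms(3) by (simp add: algebra_simps)
    then show "insert_sign \<sigma> x * B (insert x \<sigma>)
        = join_sign (F - {v}) \<rho> * (insert_sign \<rho> x * link_chain B (insert x \<rho>))" by simp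
  qed
  also have "\<dots> = join_sign (F - {v}) \<rho> * bdry_on V (link_chain B) \<rho>"
    unfolding bdry_on_def by (simp add: sum_distrib_left)
  finally show ?thesis unfolding \<sigma>_def .
qed

lemma join_cycle_eq_bdry_link_chain:
  assumes bdry_eq: "bdry_on W (join_chain z) = bdry_on W B"
    and above_F: "\<And>\<sigma>. F \<subseteq> \<sigma> \<Longrightarrow> B \<sigma> = 0"
    and blocked: "\<And>x \<sigma>. x \<in> W - F - V \<Longrightarrow> insert x (F - {v}) \<subseteq> \<sigma> \<Longrightarrow> B \<sigma> = 0"
    and "\<rho> \<subseteq> V"
  shows "z \<rho> = insert_sign (F - {v}) v * (-1) ^ card \<rho> * bdry_on V (link_chain B) \<rho>"
proof -
  have fin_\<rho>: "finite \<rho>" using assms(4) finite_V finite_subset by blast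
  define c where "c = insert_sign ((F - {v}) \<union> \<rho>) v * join_sign F \<rho>"
  have "c * z \<rho> = bdry_on W (join_chain z) ((F - {v}) \<union> \<rho>)"
    unfolding c_def bdry_join_chain_at_link[OF assms(4)] ..
  also have "\<dots> = join_sign (F - {v}) \<rho> * bdry_on V (link_chain B) \<rho>"
    unfolding bdry_eq using above_F blocked assms(4) by (rule bdry_on_at_link)
  finally have cz: "c * z \<rho> = join_sign (F - {v}) \<rho> * bdry_on V (link_chain B) \<rho>" .
  have "z \<rho> = (c * c) * z \<rho>" unfolding c_def by (simp add: algebra_simps)
  also have "\<dots> = (c * join_sign (F - {v}) \<rho>) * bdry_on V (link_chain B) \<rho>"
    by (simp only: mult.assoc cz)
  also have "c * join_sign (F - {v}) \<rho> = insert_sign (F - {v}) v * (-1) ^ card \<rho>"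
    unfolding c_def using insert_sign_times_join_signs[OF fin_\<rho> finite_F v_in_F] F_V_disjoint assms(4)
    by auto
  finally show ?thesis .
qed

end

text \<open>\<open>K\<close> and \<open>L\<close> play the roles of \<open>Ind(C)\<close> and \<open>Ind(C : F)\<close>.\<close>
locale join_link_complexes = join_frame W V F v
  for W V F :: "'a::linorder set" and v :: 'a +
  fixes K L :: "'a set set"
  assumes K_subset: "K \<subseteq> Pow W" and L_subset: "L \<subseteq> Pow V"
    and join_faces: "\<And>w \<rho>. w \<in> F \<Longrightarrow> \<rho> \<in> L \<Longrightarrow> (F - {w}) \<union> \<rho> \<in> K"
    and F_nonface: "\<And>\<sigma>. F \<subseteq> \<sigma> \<Longrightarrow> \<sigma> \<notin> K"
    and blocked_nonface: "\<And>x \<sigma>. x \<in> W - F - V \<Longrightarrow> insert x (F - {v}) \<subseteq> \<sigma> \<Longrightarrow> \<sigma> \<notin> K"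
    and link_faces: "\<And>\<rho>. \<rho> \<subseteq> V \<Longrightarrow> (F - {v}) \<union> \<rho> \<in> K \<Longrightarrow> \<rho> \<in> L"
begin

lemma card_F_pos: "card F \<ge> 1"
  using finite_F v_in_F card_0_eq by fastforce

lemma card_join: "\<rho> \<subseteq> V \<Longrightarrow> w \<in> F \<Longrightarrow> card ((F - {w}) \<union> \<rho>) = card F - 1 + card \<rho>"
  using finite_F finite_V F_V_disjoint
  by (subst card_Un_disjoint) (auto intro: finite_subset)

lemma bdry_K_eq_bdry_on: "(\<And>\<sigma>. c \<sigma> \<noteq> 0 \<Longrightarrow> \<sigma> \<in> K) \<Longrightarrow> bdry K c = bdry_on W c"
  using bdry_eq_bdry_on[OF finite_W] K_subset by blast

lemma bdry_L_eq_bdry_on: "(\<And>\<rho>. c \<rho> \<noteq> 0 \<Longrightarrow> \<rho> \<in> L) \<Longrightarrow> bdry L c = bdry_on V c"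
  using bdry_eq_bdry_on[OF finite_V] L_subset by blast

lemma bdry_join_chain_in_chains:
  assumes z: "z \<in> chains L j" and z_cycle: "bdry_on V z = (\<lambda>_. 0)"
  shows "bdry_on W (join_chain z) \<in> chains K (j + int (card F) - 1)"
  unfolding chains_def
proof (intro CollectI allI impI)
  fix \<sigma> assume nonzero: "bdry_on W (join_chain z) \<sigma> \<noteq> 0"
  have z_supp: "z \<rho> \<noteq> 0 \<Longrightarrow> \<rho> \<in> L \<and> int (card \<rho>) = j + 1" for \<rho>
    using z unfolding chains_def by blast
  then have z_supp_V: "z \<rho> \<noteq> 0 \<Longrightarrow> \<rho> \<subseteq> V" for \<rho> using L_subset by blast
  obtain x where x: "x \<in> W - \<sigma>" and "join_chain z (insert x \<sigma>) \<noteq> 0"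
    using nonzero unfolding bdry_on_def by (metis (no_types, lifting) mult_zero_right sum.neutral)
  then have F_sub: "F \<subseteq> insert x \<sigma>" and "z (insert x \<sigma> - F) \<noteq> 0"
    unfolding join_chain_def by (auto split: if_splits)
  then have \<rho>: "insert x \<sigma> - F \<in> L" "int (card (insert x \<sigma> - F)) = j + 1"
    using z_supp by auto
  have "\<sigma> \<subseteq> W"
    using join_chain_support[OF z_supp_V \<open>join_chain z (insert x \<sigma>) \<noteq> 0\<close>] by blast
  have "x \<in> F"
  proof (rule ccontr)
    assume "x \<notin> F"
    then have "F \<subseteq> \<sigma>" using F_sub by blast
    then show False using bdry_join_chain_above_F[OF z_supp_V z_cycle _ \<open>\<sigma> \<subseteq> W\<close>] nonzero by blast
  qed
  then have \<sigma>_eq: "\<sigma> = (F - {x}) \<union> (insert x \<sigma> - F)" using F_sub x by blast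
  show "\<sigma> \<in> K \<and> int (card \<sigma>) = j + int (card F) - 1 + 1"
    using join_faces[OF \<open>x \<in> F\<close> \<rho>(1)] card_join[of _ x] \<rho> L_subset \<open>x \<in> F\<close> card_F_pos
    by (subst (1 2) \<sigma>_eq) auto
qed

lemma link_chain_in_chains:
  assumes "B \<in> chains K (j + int (card F))"
  shows "link_chain B \<in> chains L (j + 1)"
  unfolding chains_def
proof (intro CollectI allI impI)
  fix \<rho> assume "link_chain B \<rho> \<noteq> 0"
  then have "\<rho> \<subseteq> V" and "B ((F - {v}) \<union> \<rho>) \<noteq> 0"
    unfolding link_chain_def by (auto split: if_splits)
  then have "(F - {v}) \<union> \<rho> \<in> K" "int (card ((F - {v}) \<union> \<rho>)) = j + int (card F) + 1"
    using assms unfolding chains_def by auto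
  then show "\<rho> \<in> L \<and> int (card \<rho>) = j + 1 + 1"
    using link_faces \<open>\<rho> \<subseteq> V\<close> card_join[OF \<open>\<rho> \<subseteq> V\<close> v_in_F] card_F_pos by auto
qed

text \<open>A non-bounding cycle \<open>z\<close> of \<open>L\<close> gives the cycle \<open>\<partial>(F * z)\<close> of \<open>K\<close>, which cannot bound.\<close>
theorem homology_shift:
  assumes "\<not> homology_vanishes L j"
  shows "\<not> homology_vanishes K (j + int (card F) - 1)"
proof
  assume K_vanishes: "homology_vanishes K (j + int (card F) - 1)"
  from assms obtain z where z: "z \<in> chains L j" and "bdry L z = (\<lambda>_. 0)"
    and not_bounding: "\<not> (\<exists>b\<in>chains L (j + 1). z = bdry L b)"
    unfolding homology_vanishes_def by blast
  have z_supp: "z \<rho> \<noteq> 0 \<Longrightarrow> \<rho> \<in> L" for \<rho> using z unfolding chains_def by blast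
  then have z_supp_V: "z \<rho> \<noteq> 0 \<Longrightarrow> \<rho> \<subseteq> V" for \<rho> using L_subset by blast
  have z_cycle: "bdry_on V z = (\<lambda>_. 0)" using \<open>bdry L z = (\<lambda>_. 0)\<close> bdry_L_eq_bdry_on z_supp by simp
  define Z where "Z = bdry_on W (join_chain z)"
  have Z: "Z \<in> chains K (j + int (card F) - 1)"
    unfolding Z_def using z z_cycle by (rule bdry_join_chain_in_chains)
  have "bdry K Z = bdry_on W Z" using Z bdry_K_eq_bdry_on unfolding chains_def by blast
  then have "bdry K Z = (\<lambda>_. 0)"
    unfolding Z_def using bdry_on_bdry_on[OF finite_W join_chain_support[OF z_supp_V]] by auto
  then obtain B where B: "B \<in> chains K (j + int (card F))" and "Z = bdry K B"
    using K_vanishes Z unfolding homology_vanishes_def by fastforce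
  have B_supp: "B \<sigma> \<noteq> 0 \<Longrightarrow> \<sigma> \<in> K" for \<sigma> using B unfolding chains_def by blast
  then have Z_eq: "Z = bdry_on W B" using \<open>Z = bdry K B\<close> bdry_K_eq_bdry_on by simp
  have B_above_F: "B \<sigma> = 0" if "F \<subseteq> \<sigma>" for \<sigma> using B_supp F_nonface that by blast
  have B_blocked: "B \<sigma> = 0" if "x \<in> W - F - V" "insert x (F - {v}) \<subseteq> \<sigma>" for x \<sigma>
    using B_supp blocked_nonface that by blast
  define s where "s = insert_sign (F - {v}) v"
  define b where "b \<rho> = (-1) ^ Suc (card \<rho>) * (s * link_chain B \<rho>)" for \<rho>
  have b: "b \<in> chains L (j + 1)"
    using link_chain_in_chains[OF B] unfolding chains_def b_def by auto
  then have b_supp: "b \<rho> \<noteq> 0 \<Longrightarrow> \<rho> \<in> L" for \<rho> unfolding chains_def by blast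
  have "z \<rho> = bdry_on V b \<rho>" for \<rho>
  proof (cases "\<rho> \<subseteq> V")
    case False
    moreover have "b \<sigma> \<noteq> 0 \<Longrightarrow> \<sigma> \<subseteq> V" for \<sigma> using b_supp L_subset by blast
    ultimately show ?thesis using z_supp_V bdry_on_outside by metis
  next
    case True
    then have "finite \<rho>" using finite_V finite_subset by blast
    have "z \<rho> = s * (-1) ^ card \<rho> * bdry_on V (link_chain B) \<rho>"
      unfolding s_def using Z_eq[unfolded Z_def] B_above_F B_blocked True
      by (rule join_cycle_eq_bdry_link_chain)
    also have "\<dots> = bdry_on V b \<rho>"
      unfolding b_def bdry_on_sign_twist[OF \<open>finite \<rho>\<close>] bdry_on_cmult by simp
    finally show ?thesis .
  qed
  then have "z = bdry L b" using bdry_L_eq_bdry_on b_supp by auto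
  then show False using not_bounding b by blast
qed

end

lemma conn_h_shift:
  fixes K L :: "'a::linorder set set"
  assumes "\<And>j. \<not> homology_vanishes L j \<Longrightarrow> \<not> homology_vanishes K (j + int d - 1)"
  shows "conn_h L \<ge> conn_h K - ereal (real d) + 1"
proof -
  have "conn_h K \<le> conn_h L + ereal (real d - 1)"
    unfolding conn_h_def
  proof (rule Sup_least)
    fix x assume "x \<in> {ereal (real_of_int k) |k. \<forall>i\<le>k. homology_vanishes K i}"
    then obtain k where x: "x = ereal (real_of_int k)" and "\<forall>i\<le>k. homology_vanishes K i" by blast
    then have "\<forall>i\<le>k - int d + 1. homology_vanishes L i"
      using assms by (metis add.commute diff_add_cancel diff_diff_eq2 diff_le_eq)
    then have "ereal (real_of_int (k - int d + 1)) \<le> conn_h L"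
      unfolding conn_h_def by (intro Sup_upper) blast
    then show "x \<le> Sup {ereal (real_of_int k) |k. \<forall>i\<le>k. homology_vanishes L i} + ereal (real d - 1)"
      unfolding x conn_h_def by (cases "conn_h L") (auto simp: conn_h_def)
  qed
  then show ?thesis by (cases "conn_h K"; cases "conn_h L") auto
qed

section \<open>Properly-connected hypergraphs\<close>

lemma diff_subset_UN_steps: "S n - S 0 \<subseteq> (\<Union>i<n. S (Suc i) - S i)"
  by (induction n) (auto simp: lessThan_Suc)

lemma chain_dist_attained:
  assumes "chain_dist C F G = enat n"
  obtains es xs where "irredundant_chain C F G es xs" "length xs = n"
proof -
  let ?S = "{enat (length xs) | es xs. irredundant_chain C F G es xs}"
  have "?S \<noteq> {}"
  proof
    assume "?S = {}"
    then have "chain_dist C F G = \<infinity>" unfolding chain_dist_def by (simp add: Inf_enat_def)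
    then show False using assms by simp
  qed
  then obtain k where "k \<in> ?S" by blast
  then have "Inf ?S \<in> ?S" unfolding Inf_enat_def by (metis (no_types, lifting) LeastI empty_iff)
  then show ?thesis using assms that unfolding chain_dist_def by auto
qed

definition exchange_property :: "nat \<Rightarrow> 'a hgraph \<Rightarrow> bool" where
  "exchange_property d C \<longleftrightarrow> (\<forall>F\<in>snd C. \<forall>G\<in>snd C. F \<inter> G \<noteq> {} \<longrightarrow> card (F \<inter> G) + 2 \<le> d \<longrightarrow>
     (\<exists>y\<in>G - F. \<exists>E\<in>snd C. E - F = {y}))"

lemma exchange_propertyD:
  assumes "exchange_property d C" "F \<in> snd C" "G \<in> snd C" "F \<inter> G \<noteq> {}" "card (F \<inter> G) + 2 \<le> d"
  obtains y E where "y \<in> G - F" "E \<in> snd C" "E - F = {y}"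
  using assms unfolding exchange_property_def by blast

lemma first_step_subset_last:
  fixes S :: "nat \<Rightarrow> 'a set"
  assumes steps: "\<And>i. i < n \<Longrightarrow> card (S (Suc i) - S i) = 1"
    and total: "card (S n - S 0) = n" and "0 < n"
  shows "S 1 - S 0 \<subseteq> S n"
proof
  fix y assume y: "y \<in> S 1 - S 0"
  then have "S 1 - S 0 = {y}" using steps[of 0] \<open>0 < n\<close> by (metis One_nat_def card_1_singletonE singletonD)
  show "y \<in> S n"
  proof (rule ccontr)
    assume "y \<notin> S n"
    have "{..<n} = insert 0 {1..<n}" using \<open>0 < n\<close> by auto
    then have "S n - S 0 \<subseteq> (\<Union>i\<in>{1..<n}. S (Suc i) - S i)"
      using diff_subset_UN_steps[of S n] \<open>S 1 - S 0 = {y}\<close> \<open>y \<notin> S n\<close> by auto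
    then have "card (S n - S 0) \<le> card (\<Union>i\<in>{1..<n}. S (Suc i) - S i)"
      using steps by (intro card_mono finite_UN_I) (auto intro: card_ge_0_finite)
    also have "\<dots> \<le> (\<Sum>i\<in>{1..<n}. card (S (Suc i) - S i))" by (rule card_UN_le) simp
    also have "\<dots> = n - 1" using steps by simp
    finally show False using total \<open>0 < n\<close> by simp
  qed
qed

text \<open>The first step of a shortest chain from \<open>F\<close> to \<open>G\<close> adds a vertex of \<open>G\<close>.\<close>
lemma properly_connected_exchange_property:
  assumes hyp: "hypergraph C" and pc: "properly_connected d C"
  shows "exchange_property d C"
  unfolding exchange_property_def
proof (intro ballI impI)
  fix F G assume F: "F \<in> snd C" and G: "G \<in> snd C" and "F \<inter> G \<noteq> {}"
    and small: "card (F \<inter> G) + 2 \<le> d"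
  define n where "n = d - card (F \<inter> G)"
  have card_E: "card E = d" if "E \<in> snd C" for E
    using pc that unfolding properly_connected_def uniform_def by blast
  have fin_E: "finite E" if "E \<in> snd C" for E
    using hyp that unfolding hypergraph_def by (meson finite_subset)
  obtain es xs where "irredundant_chain C F G es xs" "length xs = n"
    using chain_dist_attained pc F G \<open>F \<inter> G \<noteq> {}\<close> unfolding properly_connected_def n_def
    by metis
  then have "length es = n + 1" "set es \<subseteq> snd C" and ends: "es ! 0 = F" "es ! n = G"
    and steps: "\<forall>i < n. card (es ! i \<inter> es ! (i + 1)) = card (es ! (i + 1)) - 1"
    unfolding irredundant_chain_def proper_chain_def Let_def by auto
  then have edge: "es ! i \<in> snd C" if "i \<le> n" for i using that by (simp add: subset_iff)
  have step_card: "card (es ! Suc i - es ! i) = 1" if "i < n" for i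
    using steps that card_E edge small card_Diff_subset_Int[of "es ! Suc i" "es ! i"] fin_E
    by (simp add: Int_commute)
  moreover have "card (es ! n - es ! 0) = n"
    using card_Diff_subset_Int[of G F] fin_E[OF G] card_E[OF G] ends unfolding n_def
    by (simp add: Int_commute)
  ultimately have sub: "es ! 1 - F \<subseteq> G"
    using first_step_subset_last[of n "(!) es"] small ends unfolding n_def by simp
  have "card (es ! 1 - F) = 1" using step_card[of 0] small ends unfolding n_def by simp
  then obtain y where y: "es ! 1 - F = {y}" by (rule card_1_singletonE)
  then have "y \<in> es ! 1 - F" by simp
  then have "y \<in> G - F" using sub by blast
  moreover have "es ! 1 \<in> snd C" using edge small unfolding n_def by simp
  ultimately show "\<exists>y\<in>G - F. \<exists>E\<in>snd C. E - F = {y}" using y by blast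
qed

section \<open>Splitting off the edges at a simplicial vertex\<close>

definition has_simplicial_vertices :: "nat \<Rightarrow> 'a hgraph \<Rightarrow> bool" where
  "has_simplicial_vertices d C \<longleftrightarrow> (\<forall>A. A \<noteq> {} \<and> A \<subseteq> fst C \<longrightarrow>
     (\<exists>v\<in>A. induces_complete d (induced C A) (nbrs (induced C A) v)))"

text \<open>The two consequences of being properly-connected and triangulated that the splitting argument
  needs; unlike those notions, they survive passing to induced subhypergraphs and deleting all
  edges through a vertex.\<close>
definition admissible :: "nat \<Rightarrow> 'a hgraph \<Rightarrow> bool" where
  "admissible d C \<longleftrightarrow> hypergraph C \<and> uniform d C \<and> exchange_property d C \<and> has_simplicial_vertices d C"

lemma hypergraph_finite_edges:
  assumes "hypergraph C"
  shows "finite (snd C)"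
proof -
  have "snd C \<subseteq> Pow (fst C)" and "finite (fst C)" using assms unfolding hypergraph_def by blast+
  then show ?thesis by (meson finite_Pow_iff finite_subset)
qed

lemma induced_induced: "A \<subseteq> S \<Longrightarrow> induced (induced C S) A = induced C A"
  unfolding induced_def by auto

lemma admissible_induced:
  assumes adm: "admissible d C" and "S \<subseteq> fst C"
  shows "admissible d (induced C S)"
proof -
  have "hypergraph (induced C S)" "uniform d (induced C S)"
    using adm assms(2) unfolding admissible_def hypergraph_def uniform_def induced_def
    by (auto intro: finite_subset)
  moreover have "exchange_property d (induced C S)"
    unfolding exchange_property_def
  proof (intro ballI impI)
    fix F G assume F: "F \<in> snd (induced C S)" and G: "G \<in> snd (induced C S)"
      and "F \<inter> G \<noteq> {}" "card (F \<inter> G) + 2 \<le> d"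
    moreover have "F \<in> snd C" "G \<in> snd C" using F G unfolding induced_def by auto
    ultimately obtain y E where y: "y \<in> G - F" "E \<in> snd C" "E - F = {y}"
      using adm exchange_propertyD unfolding admissible_def by metis
    moreover have "E \<subseteq> S" using y F G unfolding induced_def by auto
    ultimately show "\<exists>y\<in>G - F. \<exists>E\<in>snd (induced C S). E - F = {y}" unfolding induced_def by auto
  qed
  moreover have "has_simplicial_vertices d (induced C S)"
    unfolding has_simplicial_vertices_def
  proof (intro allI impI)
    fix A assume A: "A \<noteq> {} \<and> A \<subseteq> fst (induced C S)"
    then have "A \<subseteq> S" unfolding induced_def by simp
    then show "\<exists>v\<in>A. induces_complete d (induced (induced C S) A) (nbrs (induced (induced C S) A) v)"
      using adm A assms(2) unfolding admissible_def has_simplicial_vertices_def induced_induced[OF \<open>A \<subseteq> S\<close>]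
      by auto
  qed
  ultimately show ?thesis unfolding admissible_def by blast
qed

lemma admissible_delete_star:
  assumes adm: "admissible d C" and "d \<ge> 2"
  shows "admissible d (fst C, {E\<in>snd C. v \<notin> E})"
proof -
  define D where "D = (fst C, {E\<in>snd C. v \<notin> E})"
  have "hypergraph D" "uniform d D"
    using adm unfolding admissible_def hypergraph_def uniform_def D_def by auto
  moreover have "exchange_property d D"
    unfolding exchange_property_def
  proof (intro ballI impI)
    fix F G assume F: "F \<in> snd D" and G: "G \<in> snd D" and "F \<inter> G \<noteq> {}" "card (F \<inter> G) + 2 \<le> d"
    moreover have "F \<in> snd C" "G \<in> snd C" using F G unfolding D_def by auto
    ultimately obtain y E where y: "y \<in> G - F" "E \<in> snd C" "E - F = {y}"
      using adm exchange_propertyD unfolding admissible_def by metis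
    moreover have "v \<notin> E" using y F G unfolding D_def by auto
    ultimately show "\<exists>y\<in>G - F. \<exists>E\<in>snd D. E - F = {y}" unfolding D_def by auto
  qed
  moreover have "has_simplicial_vertices d D"
    unfolding has_simplicial_vertices_def
  proof (intro allI impI)
    fix A assume A: "A \<noteq> {} \<and> A \<subseteq> fst D"
    show "\<exists>w\<in>A. induces_complete d (induced D A) (nbrs (induced D A) w)"
    proof (cases "v \<in> A")
      case True
      text \<open>\<open>v\<close> is isolated in \<open>D\<close>, and the \<open>d\<close>-complete hypergraph on no vertices has no edges.\<close>
      have "nbrs (induced D A) v = {}" unfolding nbrs_def induced_def D_def by auto
      moreover have "E \<noteq> {}" if "E \<in> snd D" for E
        using adm that \<open>d \<ge> 2\<close> unfolding admissible_def uniform_def D_def by fastforce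
      then have "induces_complete d (induced D A) {}"
        using \<open>d \<ge> 2\<close> unfolding induces_complete_def induced_def by auto
      ultimately show ?thesis using True by metis
    next
      case False
      then have "induced D A = induced C A" unfolding induced_def D_def by auto
      then show ?thesis using adm A unfolding admissible_def has_simplicial_vertices_def D_def by auto
    qed
  qed
  ultimately show ?thesis unfolding admissible_def D_def by blast
qed

lemma edge_nbhd_iff: "y \<in> edge_nbhd C F \<longleftrightarrow> (\<exists>E\<in>snd C. E - F = {y})"
proof
  assume "y \<in> edge_nbhd C F"
  then obtain E where E: "E \<in> snd C" "card (E - F) = 1" "y \<in> E - F" unfolding edge_nbhd_def by auto
  then obtain a where a: "E - F = {a}" by (meson card_1_singletonE)
  then have "E - F = {y}" using E(3) by (metis singletonD)
  then show "\<exists>E\<in>snd C. E - F = {y}" using E(1) by blast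
next
  assume "\<exists>E\<in>snd C. E - F = {y}"
  then obtain E where E: "E \<in> snd C" "E - F = {y}" by blast
  have "E - F \<in> {E - F | E. E \<in> snd C \<and> card (E - F) = 1}"
    by (rule CollectI, rule exI[of _ E]) (simp add: E)
  moreover have "y \<in> E - F" using E(2) by simp
  ultimately show "y \<in> edge_nbhd C F" unfolding edge_nbhd_def by (rule UnionI)
qed

lemma Ind_induced: "\<rho> \<in> Ind (induced C A) \<longleftrightarrow> \<rho> \<subseteq> A \<and> (\<forall>E\<in>snd C. \<not> E \<subseteq> \<rho>)"
  unfolding Ind_def induced_def by auto

locale simplicial_split =
  fixes d :: nat and C :: "'a::linorder hgraph" and v :: 'a and X :: "'a set set" and F :: "'a set"
  assumes admissible: "admissible d C" and two_le_d: "2 \<le> d"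
    and nbhd_complete: "{E \<in> snd C. E \<subseteq> nbrs C v} = {S. S \<subseteq> nbrs C v \<and> card S = d}"
    and X_star: "X \<subseteq> {E \<in> snd C. v \<in> E}"
    and F_edge: "F \<in> snd C" and v_in_F: "v \<in> F" and F_notin_X: "F \<notin> X"
begin

definition D :: "'a hgraph" where
  "D = (fst C, snd C - X)"

definition colon_vertices :: "'a set" where
  "colon_vertices = fst C - (F \<union> edge_nbhd D F)"

lemma edge_subset: "E \<in> snd C \<Longrightarrow> E \<subseteq> fst C"
  and finite_vertices: "finite (fst C)"
  and card_edge: "E \<in> snd C \<Longrightarrow> card E = d"
  and edges_antichain: "E \<in> snd C \<Longrightarrow> G \<in> snd C \<Longrightarrow> E \<subseteq> G \<Longrightarrow> E = G"
  using admissible unfolding admissible_def hypergraph_def uniform_def by blast+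

lemma finite_edge: "E \<in> snd C \<Longrightarrow> finite E"
  using edge_subset finite_vertices finite_subset by blast

lemma edges_D: "snd D = snd C - X"
  unfolding D_def by simp

lemma card_swap: "y \<notin> F \<Longrightarrow> card (insert y (F - {v})) = d"
  using finite_edge[OF F_edge] card_edge[OF F_edge] v_in_F two_le_d by simp

lemma swap_edge:
  assumes "y \<in> nbrs C v" "y \<notin> F"
  shows "insert y (F - {v}) \<in> snd D"
proof -
  have "F - {v} \<subseteq> nbrs C v" using F_edge v_in_F unfolding nbrs_def by blast
  then have "insert y (F - {v}) \<in> snd C" using assms nbhd_complete card_swap by blast
  moreover have "v \<notin> insert y (F - {v})" using assms(1) unfolding nbrs_def by blast
  ultimately show ?thesis using X_star edges_D by blast
qed

lemma edge_nbhd_swap: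
  assumes "x \<in> edge_nbhd D F"
  shows "insert x (F - {v}) \<in> snd D"
proof -
  obtain E where E: "E \<in> snd D" "E - F = {x}" using assms edge_nbhd_iff by metis
  then have "E \<in> snd C" "x \<in> E" "x \<notin> F" using edges_D by auto
  show ?thesis
  proof (cases "v \<in> E")
    case True
    then have "x \<in> nbrs C v" using \<open>E \<in> snd C\<close> \<open>x \<in> E\<close> \<open>x \<notin> F\<close> v_in_F unfolding nbrs_def by blast
    then show ?thesis using swap_edge \<open>x \<notin> F\<close> by blast
  next
    case False
    then have "E \<subseteq> insert x (F - {v})" using E by blast
    then have "E = insert x (F - {v})"
      using card_edge[OF \<open>E \<in> snd C\<close>] card_swap[OF \<open>x \<notin> F\<close>] finite_edge[OF F_edge]
      by (intro card_subset_eq) auto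
    then show ?thesis using E(1) by simp
  qed
qed

lemma card_diff_F_eq_one:
  assumes "\<not> card (F \<inter> G) + 2 \<le> d" "G \<in> snd C" "G \<noteq> F"
  shows "card (G - F) = 1"
proof -
  have "card (F \<inter> G) \<noteq> d"
  proof
    assume "card (F \<inter> G) = d"
    then have "F \<inter> G = G"
      using finite_edge[OF assms(2)] card_edge[OF assms(2)] by (intro card_subset_eq) auto
    then have "G \<subseteq> F" using Int_lower1[of F G] by simp
    then show False using edges_antichain[OF assms(2) F_edge] assms(3) by simp
  qed
  moreover have "card (F \<inter> G) \<le> d"
    using card_mono[OF finite_edge[OF assms(2)] Int_lower2] card_edge[OF assms(2)] by simp
  ultimately show ?thesis
    using assms(1) card_Diff_subset_Int[of G F] finite_edge[OF assms(2)] card_edge[OF assms(2)]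
    by (simp add: Int_commute)
qed

text \<open>A deleted edge provided by the exchange property contains \<open>v\<close>; swapping \<open>v\<close> for its new
  vertex gives an edge of \<open>D\<close>.\<close>
lemma meets_edge_nbhd:
  assumes G: "G \<in> snd D" "G \<noteq> F" "G \<inter> F \<noteq> {}"
  shows "\<exists>y\<in>G - F. y \<in> edge_nbhd D F"
proof -
  have G_edge: "G \<in> snd C" using G edges_D by blast
  have "F \<inter> G \<noteq> {}" using G(3) by blast
  show ?thesis
  proof (cases "card (F \<inter> G) + 2 \<le> d")
    case True
    have "exchange_property d C" using admissible unfolding admissible_def by blast
    then obtain y E where y: "y \<in> G - F" "E \<in> snd C" "E - F = {y}"
      using F_edge G_edge \<open>F \<inter> G \<noteq> {}\<close> True by (rule exchange_propertyD)
    have "y \<in> E" "y \<notin> F" using y(1) y(3) by auto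
    show ?thesis
    proof (cases "E \<in> X")
      case True
      then have "v \<in> E" using X_star by blast
      then have "y \<in> nbrs C v" using y(2) \<open>y \<in> E\<close> \<open>y \<notin> F\<close> v_in_F unfolding nbrs_def by blast
      then have "insert y (F - {v}) \<in> snd D" using swap_edge \<open>y \<notin> F\<close> by blast
      moreover have "insert y (F - {v}) - F = {y}" using \<open>y \<notin> F\<close> by auto
      ultimately have "y \<in> edge_nbhd D F" unfolding edge_nbhd_iff by (rule bexI[rotated])
      then show ?thesis using y(1) by (rule bexI)
    next
      case False
      then have "E \<in> snd D" using y(2) edges_D by blast
      then have "y \<in> edge_nbhd D F" unfolding edge_nbhd_iff using y(3) by (rule bexI[rotated])
      then show ?thesis using y(1) by (rule bexI)
    qed
  next
    case False
    then have "card (G - F) = 1" using G_edge G(2) by (rule card_diff_F_eq_one)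
    then obtain y where y: "G - F = {y}" by (rule card_1_singletonE)
    then have "y \<in> edge_nbhd D F" unfolding edge_nbhd_iff using G(1) by (rule bexI)
    moreover have "y \<in> G - F" using y by simp
    ultimately show ?thesis by blast
  qed
qed

lemma colon_vertices_subset: "colon_vertices \<subseteq> fst C"
  and F_colon_vertices_disjoint: "F \<inter> colon_vertices = {}"
  and edge_nbhd_colon_vertices_disjoint: "edge_nbhd D F \<inter> colon_vertices = {}"
  unfolding colon_vertices_def by blast+

lemma edge_in_colon_vertices_in_D:
  assumes "G \<in> snd C" "G \<subseteq> colon_vertices"
  shows "G \<in> snd D"
proof -
  have "v \<notin> G" using assms(2) F_colon_vertices_disjoint v_in_F by blast
  then show ?thesis using assms(1) X_star edges_D by blast
qed

definition colon_diffs :: "'a set set" where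
  "colon_diffs = {E - F | E. E \<in> snd D - {F}}"

lemma singleton_in_colon_diffs:
  assumes "y \<in> edge_nbhd D F"
  shows "{y} \<in> colon_diffs"
proof -
  obtain E where E: "E \<in> snd D" "E - F = {y}" using assms unfolding edge_nbhd_iff by blast
  then have "y \<in> E - F" by simp
  then have "E \<noteq> F" by blast
  then show ?thesis unfolding colon_diffs_def using E by blast
qed

text \<open>A vertex of \<open>N(F)\<close> in \<open>M\<close> would make \<open>M\<close> a singleton, by minimality; so the edge \<open>G\<close>
  with \<open>M = G - F\<close> misses \<open>F\<close> by \<open>meets_edge_nbhd\<close>.\<close>
lemma minimal_colon_diff_edge:
  assumes M: "M \<in> colon_diffs" and minimal: "\<forall>M'\<in>colon_diffs. M' \<subseteq> M \<longrightarrow> M' = M"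
    and "card M \<ge> 2"
  shows "M \<in> snd C" "M \<subseteq> colon_vertices"
proof -
  obtain G where G: "G \<in> snd D" "G \<noteq> F" "M = G - F" using M unfolding colon_diffs_def by blast
  have no_nbhd: "y \<notin> M" if "y \<in> edge_nbhd D F" for y
  proof
    assume "y \<in> M"
    then have "{y} = M" using minimal singleton_in_colon_diffs[OF that] by blast
    then show False using \<open>card M \<ge> 2\<close> by auto
  qed
  have "G \<inter> F = {}" using meets_edge_nbhd[OF G(1,2)] no_nbhd G(3) by blast
  then have "M = G" using G(3) by blast
  moreover have "G \<subseteq> fst C" "G \<in> snd C" using G(1) edges_D edge_subset by blast+
  ultimately show "M \<in> snd C" "M \<subseteq> colon_vertices"
    using \<open>G \<inter> F = {}\<close> no_nbhd unfolding colon_vertices_def by blast+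
qed

lemma edge_minimal_colon_diff:
  assumes G: "G \<in> snd C" "G \<subseteq> colon_vertices"
  shows "G \<in> colon_diffs" "\<forall>M'\<in>colon_diffs. M' \<subseteq> G \<longrightarrow> M' = G"
proof -
  have "G \<in> snd D" using G by (rule edge_in_colon_vertices_in_D)
  have "G \<inter> F = {}" using G(2) F_colon_vertices_disjoint by blast
  then have "G \<noteq> F" using v_in_F by blast
  show "G \<in> colon_diffs" unfolding colon_diffs_def using \<open>G \<in> snd D\<close> \<open>G \<noteq> F\<close> \<open>G \<inter> F = {}\<close>
    by (intro CollectI exI[of _ G]) auto
  show "\<forall>M'\<in>colon_diffs. M' \<subseteq> G \<longrightarrow> M' = G"
  proof (intro ballI impI)
    fix M' assume "M' \<in> colon_diffs" "M' \<subseteq> G"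
    obtain G' where G': "G' \<in> snd D" "G' \<noteq> F" "M' = G' - F"
      using \<open>M' \<in> colon_diffs\<close> unfolding colon_diffs_def by blast
    show "M' = G"
    proof (cases "G' \<inter> F = {}")
      case True
      then have "G' \<subseteq> G" using G' \<open>M' \<subseteq> G\<close> by blast
      then have "G' = G" using edges_antichain G'(1) G(1) edges_D by blast
      then show ?thesis using G'(3) True by blast
    next
      case False
      then obtain y where "y \<in> G' - F" "y \<in> edge_nbhd D F" using meets_edge_nbhd G' by blast
      then have "y \<in> colon_vertices" using G' \<open>M' \<subseteq> G\<close> G(2) by blast
      then show ?thesis using \<open>y \<in> edge_nbhd D F\<close> edge_nbhd_colon_vertices_disjoint by blast
    qed
  qed
qed

lemma colon_eq_induced: "colon D F = induced C colon_vertices"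
proof -
  have "{M \<in> colon_diffs. (\<forall>M'\<in>colon_diffs. M' \<subseteq> M \<longrightarrow> M' = M) \<and> card M \<ge> 2}
      = {G \<in> snd C. G \<subseteq> colon_vertices}"
  proof (intro equalityI subsetI)
    fix M assume "M \<in> {M \<in> colon_diffs. (\<forall>M'\<in>colon_diffs. M' \<subseteq> M \<longrightarrow> M' = M) \<and> card M \<ge> 2}"
    then show "M \<in> {G \<in> snd C. G \<subseteq> colon_vertices}" using minimal_colon_diff_edge by blast
  next
    fix G assume "G \<in> {G \<in> snd C. G \<subseteq> colon_vertices}"
    moreover have "card G \<ge> 2" if "G \<in> snd C" for G using card_edge[OF that] two_le_d by simp
    ultimately show "G \<in> {M \<in> colon_diffs. (\<forall>M'\<in>colon_diffs. M' \<subseteq> M \<longrightarrow> M' = M) \<and> card M \<ge> 2}"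
      using edge_minimal_colon_diff by blast
  qed
  then show ?thesis
    unfolding colon_def Let_def induced_def colon_vertices_def colon_diffs_def by (simp add: D_def)
qed

lemma Ind_D_iff: "\<sigma> \<in> Ind D \<longleftrightarrow> \<sigma> \<subseteq> fst C \<and> (\<forall>G\<in>snd D. \<not> G \<subseteq> \<sigma>)"
  unfolding Ind_def D_def by simp

lemma join_face_in_Ind_D:
  assumes w: "w \<in> F" and "\<rho> \<in> Ind (induced C colon_vertices)"
  shows "(F - {w}) \<union> \<rho> \<in> Ind D"
proof -
  have \<rho>: "\<rho> \<subseteq> colon_vertices" "\<forall>E\<in>snd C. \<not> E \<subseteq> \<rho>" using assms(2) unfolding Ind_induced by auto
  have "\<not> G \<subseteq> (F - {w}) \<union> \<rho>" if G: "G \<in> snd D" for G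
  proof
    assume G_sub: "G \<subseteq> (F - {w}) \<union> \<rho>"
    have "G \<noteq> F" using G_sub w \<rho>(1) F_colon_vertices_disjoint by blast
    show False
    proof (cases "G \<inter> F = {}")
      case True
      then show False using G_sub \<rho>(2) G edges_D by blast
    next
      case False
      then obtain y where "y \<in> G - F" "y \<in> edge_nbhd D F"
        using meets_edge_nbhd G \<open>G \<noteq> F\<close> by blast
      then show False using G_sub \<rho>(1) edge_nbhd_colon_vertices_disjoint by blast
    qed
  qed
  moreover have "(F - {w}) \<union> \<rho> \<subseteq> fst C"
    using edge_subset[OF F_edge] \<rho>(1) colon_vertices_subset by blast
  ultimately show ?thesis unfolding Ind_D_iff by blast
qed

lemma link_face_in_Ind_induced:
  assumes \<rho>: "\<rho> \<subseteq> colon_vertices" and face: "(F - {v}) \<union> \<rho> \<in> Ind D"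
  shows "\<rho> \<in> Ind (induced C colon_vertices)"
proof -
  have "\<not> E \<subseteq> \<rho>" if "E \<in> snd C" for E
  proof
    assume "E \<subseteq> \<rho>"
    then have "E \<in> snd D" using edge_in_colon_vertices_in_D \<open>E \<in> snd C\<close> \<rho> by blast
    then show False using face \<open>E \<subseteq> \<rho>\<close> unfolding Ind_D_iff by blast
  qed
  then show ?thesis unfolding Ind_induced using \<rho> by blast
qed

lemma conn_h_colon: "conn_h (Ind (colon D F)) \<ge> conn_h (Ind D) - ereal (real (card F)) + 1"
proof -
  interpret join_link_complexes "fst C" colon_vertices F v "Ind D" "Ind (induced C colon_vertices)"
  proof unfold_locales
    show "finite (fst C)" "v \<in> F" "F \<subseteq> fst C" "colon_vertices \<subseteq> fst C"
      "F \<inter> colon_vertices = {}"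
      using finite_vertices v_in_F edge_subset[OF F_edge] colon_vertices_subset
        F_colon_vertices_disjoint by auto
    show "Ind D \<subseteq> Pow (fst C)" "Ind (induced C colon_vertices) \<subseteq> Pow colon_vertices"
      by (auto simp: Ind_D_iff Ind_induced)
  next
    show "(F - {w}) \<union> \<rho> \<in> Ind D" if "w \<in> F" "\<rho> \<in> Ind (induced C colon_vertices)" for w \<rho>
      using that by (rule join_face_in_Ind_D)
  next
    have "F \<in> snd D" using F_edge F_notin_X edges_D by blast
    then show "\<sigma> \<notin> Ind D" if "F \<subseteq> \<sigma>" for \<sigma>
      using that unfolding Ind_D_iff by blast
    show "\<sigma> \<notin> Ind D" if "x \<in> fst C - F - colon_vertices" "insert x (F - {v}) \<subseteq> \<sigma>" for x \<sigma>
    proof -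
      have "x \<in> edge_nbhd D F" using that(1) unfolding colon_vertices_def by blast
      then have "insert x (F - {v}) \<in> snd D" by (rule edge_nbhd_swap)
      then show ?thesis using that(2) unfolding Ind_D_iff by blast
    qed
    show "\<rho> \<in> Ind (induced C colon_vertices)"
      if "\<rho> \<subseteq> colon_vertices" "(F - {v}) \<union> \<rho> \<in> Ind D" for \<rho>
      using that by (rule link_face_in_Ind_induced)
  qed
  have "conn_h (Ind (induced C colon_vertices)) \<ge> conn_h (Ind D) - ereal (real (card F)) + 1"
    using homology_shift by (rule conn_h_shift)
  then show ?thesis unfolding colon_eq_induced .
qed

end

lemma properly_splitted_delete_star_edges:
  fixes C :: "'a::linorder hgraph"
  assumes adm: "admissible d C" and "2 \<le> d"
    and nbhd_complete: "{E \<in> snd C. E \<subseteq> nbrs C v} = {S. S \<subseteq> nbrs C v \<and> card S = d}"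
    and smaller: "\<And>C' :: 'a hgraph. admissible d C' \<Longrightarrow> card (snd C') < card (snd C) \<Longrightarrow> properly_splitted C'"
    and v_covered: "\<exists>E\<in>snd C. v \<in> E"
  shows "X \<subseteq> {E \<in> snd C. v \<in> E} \<Longrightarrow> properly_splitted (fst C, snd C - X)"
proof (induction "card ({E \<in> snd C. v \<in> E} - X)" arbitrary: X rule: less_induct)
  case less
  have fin: "finite (snd C)" using adm hypergraph_finite_edges unfolding admissible_def by blast
  show ?case
  proof (cases "{E \<in> snd C. v \<in> E} \<subseteq> X")
    case True
    then have "snd C - X = {E \<in> snd C. v \<notin> E}" using less.prems by blast
    moreover have "card {E \<in> snd C. v \<notin> E} < card (snd C)"
      using v_covered fin by (intro psubset_card_mono) auto
    ultimately show ?thesis using smaller admissible_delete_star[OF adm \<open>2 \<le> d\<close>] by simp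
  next
    case False
    then obtain F where F: "F \<in> snd C" "v \<in> F" "F \<notin> X" by blast
    interpret simplicial_split d C v X F
      using adm \<open>2 \<le> d\<close> nbhd_complete less.prems F by unfold_locales auto
    have "properly_splitted D"
    proof (rule properly_splitted.split[of F])
      show "F \<in> snd D" using F edges_D by blast
      show "conn_h (Ind (colon D F)) \<ge> conn_h (Ind D) - ereal (real (card F)) + 1"
        by (rule conn_h_colon)
      have "del_edge D F = (fst C, snd C - insert F X)" unfolding del_edge_def D_def by auto
      moreover have "card ({E \<in> snd C. v \<in> E} - insert F X) < card ({E \<in> snd C. v \<in> E} - X)"
        using F fin by (intro psubset_card_mono) auto
      ultimately show "properly_splitted (del_edge D F)" using less.hyps less.prems F by simp
      have "F \<notin> snd (induced C colon_vertices)"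
        using F(2) F_colon_vertices_disjoint unfolding induced_def by auto
      then have "card (snd (induced C colon_vertices)) < card (snd C)"
        using F(1) fin by (intro psubset_card_mono) (auto simp: induced_def)
      then show "properly_splitted (colon D F)"
        unfolding colon_eq_induced using smaller admissible_induced[OF adm colon_vertices_subset] by blast
    qed
    then show ?thesis unfolding D_def .
  qed
qed

lemma admissible_properly_splitted:
  fixes C :: "'a::linorder hgraph"
  assumes "admissible d C" and "2 \<le> d"
  shows "properly_splitted C"
  using assms(1)
proof (induction "card (snd C)" arbitrary: C rule: less_induct)
  case less
  show ?case
  proof (cases "snd C = {}")
    case True
    then show ?thesis by (rule properly_splitted.no_edges)
  next
    case False
    have hyp: "hypergraph C" using less.prems unfolding admissible_def by blast
    define A where "A = \<Union>(snd C)"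
    have "E \<noteq> {}" if "E \<in> snd C" for E using hyp that unfolding hypergraph_def by fastforce
    then have "A \<noteq> {}" unfolding A_def using False by blast
    moreover have "A \<subseteq> fst C" unfolding A_def using hyp unfolding hypergraph_def by blast
    ultimately obtain v where "v \<in> A" and complete: "induces_complete d (induced C A) (nbrs (induced C A) v)"
      using less.prems unfolding admissible_def has_simplicial_vertices_def by blast
    have induced_A: "induced C A = (A, snd C)" unfolding induced_def A_def by auto
    have "nbrs (A, snd C) v = nbrs C v" unfolding nbrs_def by simp
    then have nbhd_complete: "{E \<in> snd C. E \<subseteq> nbrs C v} = {S. S \<subseteq> nbrs C v \<and> card S = d}"
      using complete unfolding induced_A induces_complete_def by (simp add: induced_def)
    have "\<exists>E\<in>snd C. v \<in> E" using \<open>v \<in> A\<close> unfolding A_def by blast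
    from properly_splitted_delete_star_edges[OF less.prems assms(2) nbhd_complete less.hyps this]
    have "properly_splitted (fst C, snd C - {})" by blast
    then show ?thesis by simp
  qed
qed

lemma triangulated_has_simplicial_vertices:
  assumes "triangulated d C"
  shows "has_simplicial_vertices d C"
  unfolding has_simplicial_vertices_def
proof (intro allI impI)
  fix A assume "A \<noteq> {} \<and> A \<subseteq> fst C"
  from assms[unfolded triangulated_def, THEN conjunct2, THEN conjunct2, rule_format, OF this]
  show "\<exists>v\<in>A. induces_complete d (induced C A) (nbrs (induced C A) v)" by (elim bexE conjE) (rule bexI)
qed

theorem lemma4p2:
  fixes C :: "'a::linorder hgraph" and d :: nat
  assumes "hypergraph C"
    and "uniform d C"
    and "properly_connected d C"
    and "triangulated d C"
  shows "properly_splitted C"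
proof (cases "snd C = {}")
  case True
  then show ?thesis by (rule properly_splitted.no_edges)
next
  case False
  then obtain E where "E \<in> snd C" by blast
  then have "card E = d" "card E \<ge> 2"
    using assms(1,2) unfolding hypergraph_def uniform_def by blast+
  then have "2 \<le> d" by simp
  have "admissible d C"
    unfolding admissible_def
    using assms(1,2) properly_connected_exchange_property[OF assms(1,3)]
      triangulated_has_simplicial_vertices[OF assms(4)] by blast
  then show ?thesis using \<open>2 \<le> d\<close> by (rule admissible_properly_splitted)
qed

end
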